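(* Let $A$ be a finite alphabet with $k=|A|$, let $L\subseteq A^*$ be $n$-PT, and let $m=f_k(n)$. For every $u\in L$ there is a D-product $P_u$ of length $\ell\leq mk+m+k$ such that $u\in P_u\subseteq L$.
   Context: A D-product is a regular expression $E_1E_2\cdots E_\ell$ where each $E_i$ is either $B^*$ for a subalphabet $B\subseteq A$ or a single letter $a\in A$; $\ell$ is its length, and it also denotes its language. $u\sim_n v$ iff $u,v$ have the same (scattered) subwords of length at most $n$; $L$ is $n$-PT if it is a union of $\sim_n$-classes. The functions $f_k$ ($k\geq1$) are defined by $f_1(n)=n$ and $f_{k+1}(n)=\max_{0\leq m\leq n}\bigl(m f_k(n+1-m)+m+f_k(n-m)\bigr)$. *)

theory Defs
  imports Main "HOL-Library.Sublist"
begin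

definition subwords_upto :: "nat \<Rightarrow> 'a list \<Rightarrow> 'a list set" where
  "subwords_upto n u = {v. subseq v u \<and> length v \<le> n}"

definition sim :: "nat \<Rightarrow> 'a list \<Rightarrow> 'a list \<Rightarrow> bool" where
  "sim n u v \<longleftrightarrow> subwords_upto n u = subwords_upto n v"

definition n_PT :: "'a set \<Rightarrow> nat \<Rightarrow> 'a list set \<Rightarrow> bool" where
  "n_PT A n L \<longleftrightarrow> L \<subseteq> lists A \<and>
     (\<forall>u\<in>lists A. \<forall>v\<in>lists A. sim n u v \<longrightarrow> (u \<in> L \<longleftrightarrow> v \<in> L))"

text \<open>Factors of a D-product: B* for a subalphabet B, or a single letter.\<close>
datatype 'a dfactor = Star "'a set" | Letter 'a

definition dproduct :: "'a set \<Rightarrow> 'a dfactor list \<Rightarrow> bool" where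
  "dproduct A P \<longleftrightarrow> (\<forall>E\<in>set P. case E of Star B \<Rightarrow> B \<subseteq> A | Letter a \<Rightarrow> a \<in> A)"

primrec dlang :: "'a dfactor list \<Rightarrow> 'a list set" where
  "dlang [] = {[]}"
| "dlang (E # P) = (case E of
      Star B \<Rightarrow> {x @ y | x y. x \<in> lists B \<and> y \<in> dlang P}
    | Letter a \<Rightarrow> {a # y | y. y \<in> dlang P})"

text \<open>fseq k = f_k for k \<ge> 1 (fseq 0 is a junk value, never used).\<close>
primrec fseq :: "nat \<Rightarrow> nat \<Rightarrow> nat" where
  "fseq 0 n = n"
| "fseq (Suc k) n = (if k = 0 then n
     else Max ((\<lambda>m. m * fseq k (n + 1 - m) + m + fseq k (n - m)) ` {0..n}))"

end

theory Submission
  imports Defs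
begin

text \<open>
  Let B be the alphabet of u. Cut u greedily into arches, u = w1 a1 ... wr ar v: each wi ai is
  the shortest prefix of what remains that contains all of B, so ai does not occur in wi and
  alph wi = B - {ai}; stop after r = n arches or when the rest v no longer contains all of B.
  Replace each wi by a D-product for its \<sim>(n+1-r)-class and v by one for its \<sim>(n-r)-class,
  both obtained recursively since their alphabets are smaller, and keep the letters ai. In a
  word x1 a1 x' of the resulting product, a subword of length at most n either embeds into
  w1 a1 with its part of length at most n+1-r, or its overflow into the remaining arches is
  short enough to be found in any word of them, each such word containing every word over B of
  length r-1. Counting letters gives the recursion of f_k; each letter brings at most k+1
  starred factors.
\<close>

definition subwords_incl :: "nat \<Rightarrow> 'a list \<Rightarrow> 'a list \<Rightarrow> bool" where
  "subwords_incl N x y \<longleftrightarrow> subwords_upto N x \<subseteq> subwords_upto N y"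

definition universal :: "'a set \<Rightarrow> nat \<Rightarrow> 'a list \<Rightarrow> bool" where
  "universal B d x \<longleftrightarrow> (\<forall>s\<in>lists B. length s \<le> d \<longrightarrow> subseq s x)"

lemma sim_iff_subwords_incl: "sim N x y \<longleftrightarrow> subwords_incl N x y \<and> subwords_incl N y x"
  unfolding sim_def subwords_incl_def by blast

lemma subwords_inclI:
  "(\<And>s. subseq s x \<Longrightarrow> length s \<le> N \<Longrightarrow> subseq s y) \<Longrightarrow> subwords_incl N x y"
  unfolding subwords_incl_def subwords_upto_def by blast

lemma subwords_inclD: "subwords_incl N x y \<Longrightarrow> subseq s x \<Longrightarrow> length s \<le> N \<Longrightarrow> subseq s y"
  unfolding subwords_incl_def subwords_upto_def by blast

lemma sim_mono: "sim q x y \<Longrightarrow> N \<le> q \<Longrightarrow> sim N x y"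
  unfolding sim_iff_subwords_incl by (meson order_trans subwords_inclD subwords_inclI)

lemma sim_0: "sim 0 x y"
  unfolding sim_def subwords_upto_def by auto

lemma sim_set_eq:
  assumes "sim n x y" "1 \<le> n"
  shows "set x = set y"
proof -
  have "subseq [c] x \<longleftrightarrow> subseq [c] y" for c
    using assms unfolding sim_iff_subwords_incl by (auto intro: subwords_inclD)
  then show ?thesis by (auto simp: subseq_singleton_left)
qed

lemma universal_mono: "universal B d x \<Longrightarrow> d' \<le> d \<Longrightarrow> universal B d' x"
  unfolding universal_def by auto

lemma universal_append_left:
  assumes "B \<subseteq> set y" "universal B d x"
  shows "universal B (Suc d) (y @ x)"
  unfolding universal_def
proof (intro ballI impI)
  fix s assume s: "s \<in> lists B" "length s \<le> Suc d"
  show "subseq s (y @ x)"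
  proof (cases s)
    case Nil then show ?thesis by simp
  next
    case (Cons c s')
    then have "subseq [c] y" using s assms(1) subseq_singleton_left by fastforce
    moreover have "subseq s' x" using assms(2) s Cons unfolding universal_def by auto
    ultimately have "subseq ([c] @ s') (y @ x)" by (rule list_emb_append_mono)
    then show ?thesis using Cons by simp
  qed
qed

lemma subseq_snoc_transfer:
  assumes "subseq t (w @ [a])" "length t \<le> p" "subwords_incl p w w'"
  shows "subseq t (w' @ [a])"
proof -
  obtain t1 t2 where t: "t = t1 @ t2" "subseq t1 w" "subseq t2 [a]"
    using assms(1) by (auto elim: subseq_appendE)
  have "subseq t1 w'" using assms t by (auto intro: subwords_inclD)
  then show ?thesis using t list_emb_append_mono by blast
qed

text \<open>
  Split a subword s of w a z as t y with t \<sqsubseteq> w a and y \<sqsubseteq> z. If t is empty, the first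
  letter of s lies in B \<subseteq> alph (w' a) and the rest is a subword of z of length < N; if
  0 < |t| \<le> p, then t transfers to w' a and |y| < N; otherwise the first p letters of t are
  matched in w' a and the remaining at most N - p letters in the universal z'.
\<close>
lemma subwords_incl_arch_step:
  assumes "set (w @ a # z) \<subseteq> B" "B \<subseteq> insert a (set w')" "subwords_incl p w w'"
    "subwords_incl (N - 1) z z'" "universal B (N - p) z'"
  shows "subwords_incl N (w @ a # z) (w' @ a # z')"
proof (rule subwords_inclI)
  fix s assume ss: "subseq s (w @ a # z)" and sl: "length s \<le> N"
  have sB: "set s \<subseteq> B" using assms(1) list_emb_set[OF ss] by auto
  obtain t y where ty: "s = t @ y" "subseq t (w @ [a])" "subseq y z"
    using ss subseq_appendE[of s "w @ [a]" z] by auto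
  have target: "w' @ a # z' = (w' @ [a]) @ z'" by simp
  show "subseq s (w' @ a # z')"
  proof (cases "t = []")
    case True
    show ?thesis
    proof (cases s)
      case Nil then show ?thesis by simp
    next
      case (Cons c s')
      have "c \<in> set (w' @ [a])" using sB Cons assms(2) by auto
      then have "subseq [c] (w' @ [a])" by (simp only: subseq_singleton_left)
      moreover have "subseq s' z"
        using ty True Cons by (auto intro: subseq_Cons')
      then have "subseq s' z'" using Cons sl assms(4) by (auto intro: subwords_inclD)
      ultimately have "subseq ([c] @ s') ((w' @ [a]) @ z')" by (rule list_emb_append_mono)
      then show ?thesis using Cons by simp
    qed
  next
    case False
    show ?thesis
    proof (cases "length t \<le> p")
      case True
      have "subseq t (w' @ [a])" using subseq_snoc_transfer ty(2) True assms(3) .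
      moreover have "subseq y z'"
        using ty sl False assms(4) by (cases t) (auto intro: subwords_inclD)
      ultimately show ?thesis unfolding target ty(1) by (rule list_emb_append_mono)
    next
      case False
      have "subseq (take p t) t" by (simp add: prefix_imp_subseq take_is_prefix)
      then have "subseq (take p t) (w @ [a])" using ty(2) by (rule subseq_order.order_trans)
      then have "subseq (take p t) (w' @ [a])" using subseq_snoc_transfer[OF _ _ assms(3)] by simp
      moreover have "subseq (drop p t @ y) z'"
      proof -
        have "drop p t @ y \<in> lists B" using sB ty(1) by (auto dest: in_set_dropD)
        moreover have "length (drop p t @ y) \<le> N - p" using ty(1) sl False by simp
        ultimately show ?thesis using assms(5) unfolding universal_def by blast
      qed
      ultimately have "subseq (take p t @ drop p t @ y) ((w' @ [a]) @ z')"
        by (rule list_emb_append_mono)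
      then show ?thesis using ty(1) by (simp only: append_take_drop_id append_assoc[symmetric] target)
    qed
  qed
qed

definition is_arch :: "'a set \<Rightarrow> 'a list \<Rightarrow> 'a \<Rightarrow> bool" where
  "is_arch B w a \<longleftrightarrow> a \<notin> set w \<and> insert a (set w) = B"

lemma sim_arch_Cons:
  assumes "is_arch B w a" "sim p x1 w" "1 \<le> p" "sim (N - 1) x' z"
    "set x' \<subseteq> B" "set z \<subseteq> B" "universal B (N - p) x'" "universal B (N - p) z"
  shows "sim N (x1 @ a # x') (w @ a # z)"
proof -
  have "set x1 = set w" using sim_set_eq assms(2,3) .
  then have "set (x1 @ a # x') \<subseteq> B" "set (w @ a # z) \<subseteq> B"
    "B \<subseteq> insert a (set x1)" "B \<subseteq> insert a (set w)"
    using assms(1,5,6) unfolding is_arch_def by auto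
  then show ?thesis using assms(2,4,7,8)
    unfolding sim_iff_subwords_incl by (blast intro: subwords_incl_arch_step)
qed

lemma dlang_append: "dlang (P @ Q) = {x @ y | x y. x \<in> dlang P \<and> y \<in> dlang Q}"
proof (induction P)
  case Nil then show ?case by simp
next
  case (Cons E P)
  show ?case
  proof (cases E)
    case (Star B)
    have "dlang ((E # P) @ Q) = {x @ y @ z | x y z. x \<in> lists B \<and> y \<in> dlang P \<and> z \<in> dlang Q}"
      using Star Cons.IH by auto
    also have "\<dots> = {x @ y | x y. x \<in> dlang (E # P) \<and> y \<in> dlang Q}"
      using Star by (auto simp flip: append_assoc)
    finally show ?thesis .
  next
    case (Letter a)
    have "dlang ((E # P) @ Q) = {a # x @ y | x y. x \<in> dlang P \<and> y \<in> dlang Q}"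
      using Letter Cons.IH by auto
    also have "\<dots> = {x @ y | x y. x \<in> dlang (E # P) \<and> y \<in> dlang Q}"
      using Letter by (auto; metis append_Cons)
    finally show ?thesis .
  qed
qed

lemma append_in_dlang_append: "x \<in> dlang P \<Longrightarrow> y \<in> dlang Q \<Longrightarrow> x @ y \<in> dlang (P @ Q)"
  unfolding dlang_append by blast

lemma dproduct_append: "dproduct X (P @ Q) \<longleftrightarrow> dproduct X P \<and> dproduct X Q"
  unfolding dproduct_def by auto

lemma dproduct_mono: "dproduct X P \<Longrightarrow> X \<subseteq> Y \<Longrightarrow> dproduct Y P"
  unfolding dproduct_def by (fastforce split: dfactor.splits)

lemma dlang_subset_lists: "dproduct X P \<Longrightarrow> dlang P \<subseteq> lists X"
proof (induction P)
  case Nil then show ?case by simp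
next
  case (Cons E P)
  then have "dlang P \<subseteq> lists X" unfolding dproduct_def by simp
  with Cons.prems show ?case unfolding dproduct_def by (cases E) (force simp: subset_iff)+
qed

primrec num_letters :: "'a dfactor list \<Rightarrow> nat" where
  "num_letters [] = 0"
| "num_letters (E # P) = (case E of Letter _ \<Rightarrow> Suc (num_letters P) | Star _ \<Rightarrow> num_letters P)"

lemma num_letters_append: "num_letters (P @ Q) = num_letters P + num_letters Q"
  by (induction P) (auto split: dfactor.splits)

lemma shortest_covering_prefix:
  "B \<subseteq> set u \<Longrightarrow> B \<noteq> {} \<Longrightarrow> \<exists>w a z. u = w @ a # z \<and> \<not> B \<subseteq> set w \<and> B \<subseteq> insert a (set w)"
proof (induction u rule: rev_induct)
  case Nil then show ?case by simp
next
  case (snoc c u)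
  show ?case
  proof (cases "B \<subseteq> set u")
    case True
    then obtain w a z where "u = w @ a # z" "\<not> B \<subseteq> set w" "B \<subseteq> insert a (set w)"
      using snoc by blast
    then show ?thesis by (intro exI[of _ w] exI[of _ a] exI[of _ "z @ [c]"]) simp
  next
    case False
    then show ?thesis using snoc.prems by (intro exI[of _ u] exI[of _ c] exI[of _ "[]"]) auto
  qed
qed

fun arch_word :: "('a list \<times> 'a) list \<Rightarrow> 'a list" where
  "arch_word [] = []"
| "arch_word ((w, a) # T) = w @ a # arch_word T"

lemma arch_factorization:
  assumes "set u \<subseteq> B" "B \<noteq> {}"
  shows "\<exists>T v. length T \<le> n \<and> u = arch_word T @ v \<and> (\<forall>(w, a)\<in>set T. is_arch B w a)
    \<and> (length T < n \<longrightarrow> \<not> B \<subseteq> set v)"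
  using assms(1)
proof (induction n arbitrary: u)
  case 0
  show ?case by (intro exI[of _ "[]"] exI[of _ u]) simp
next
  case (Suc n)
  show ?case
  proof (cases "B \<subseteq> set u")
    case False
    then show ?thesis by (intro exI[of _ "[]"] exI[of _ u]) simp
  next
    case True
    then obtain w a z where wa: "u = w @ a # z" "\<not> B \<subseteq> set w" "B \<subseteq> insert a (set w)"
      using shortest_covering_prefix[OF True assms(2)] by blast
    have arch: "is_arch B w a" using wa Suc.prems unfolding is_arch_def by auto
    obtain T v where "length T \<le> n" "z = arch_word T @ v" "\<forall>(w, a)\<in>set T. is_arch B w a"
      "length T < n \<longrightarrow> \<not> B \<subseteq> set v"
      using Suc.IH[of z] wa(1) Suc.prems by auto
    then show ?thesis using wa(1) arch by (intro exI[of _ "(w, a) # T"] exI[of _ v]) auto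
  qed
qed

fun arch_dprod :: "('a list \<Rightarrow> 'a dfactor list) \<Rightarrow> ('a list \<times> 'a) list \<Rightarrow> 'a dfactor list" where
  "arch_dprod f [] = []"
| "arch_dprod f ((w, a) # T) = f w @ Letter a # arch_dprod f T"

lemma arch_word_in_dlang:
  "\<forall>(w, a)\<in>set T. w \<in> dlang (f w) \<Longrightarrow> arch_word T \<in> dlang (arch_dprod f T)"
  by (induction T rule: arch_word.induct) (force simp: dlang_append)+

lemma dproduct_arch_dprod:
  "\<forall>(w, a)\<in>set T. a \<in> X \<and> dproduct X (f w) \<Longrightarrow> dproduct X (arch_dprod f T)"
  by (induction T rule: arch_word.induct) (auto simp: dproduct_def)

lemma arch_dprod_sim:
  assumes arches: "\<forall>(w, a)\<in>set T. is_arch B w a \<and> w \<in> dlang (f w)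
      \<and> dlang (f w) \<subseteq> {x. sim p x w} \<and> dproduct B (f w)"
    and Q: "v \<in> dlang Q" "dlang Q \<subseteq> {y. sim q y v}" "dproduct B Q"
    and p: "1 \<le> p" and N: "N \<le> q + length T" "N < p + length T"
  shows "\<forall>x\<in>dlang (arch_dprod f T @ Q). sim N x (arch_word T @ v) \<and> universal B (length T) x"
  using arches N
proof (induction T arbitrary: N rule: arch_word.induct)
  case 1
  then show ?case using Q(2) by (auto intro: sim_mono simp: universal_def)
next
  case (2 w a T)
  let ?R = "arch_dprod f T @ Q" and ?z = "arch_word T @ v"
  have arch: "is_arch B w a" and fw: "dlang (f w) \<subseteq> {x. sim p x w}"
    using "2.prems"(1) by auto
  have IH: "\<forall>x\<in>dlang ?R. sim (N - 1) x ?z \<and> universal B (length T) x"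
    using "2.IH"[of "N - 1"] "2.prems" p by auto
  have R_B: "dproduct B ?R"
    using "2.prems"(1) Q(3) unfolding is_arch_def
    by (auto simp: dproduct_append intro!: dproduct_arch_dprod)
  have z_R: "?z \<in> dlang ?R"
    using "2.prems"(1) Q(1) by (intro append_in_dlang_append arch_word_in_dlang) auto
  have "sim N x (w @ a # ?z) \<and> universal B (Suc (length T)) x"
    if x_in: "x \<in> dlang (f w @ Letter a # ?R)" for x
  proof -
    obtain x1 x' where x: "x = x1 @ a # x'" "x1 \<in> dlang (f w)" "x' \<in> dlang ?R"
      using x_in unfolding dlang_append[of "f w"] by auto
    have "set x1 = set w" using fw x(2) sim_set_eq p by blast
    then have "B \<subseteq> set (x1 @ [a])" using arch unfolding is_arch_def by auto
    moreover have "universal B (length T) x'" using IH x(3) by blast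
    ultimately have "universal B (Suc (length T)) ((x1 @ [a]) @ x')"
      by (rule universal_append_left)
    then have "universal B (Suc (length T)) (x1 @ a # x')" by simp
    moreover have "sim N (x1 @ a # x') (w @ a # ?z)"
    proof (rule sim_arch_Cons[OF arch _ p])
      show "sim p x1 w" using fw x(2) by blast
      show "sim (N - 1) x' ?z" "universal B (N - p) x'" "universal B (N - p) ?z"
        using IH x(3) z_R "2.prems"(3) by (auto intro: universal_mono)
      show "set x' \<subseteq> B" "set ?z \<subseteq> B"
        using dlang_subset_lists[OF R_B] x(3) z_R by auto
    qed
    ultimately show ?thesis using x(1) by simp
  qed
  then show ?case by simp
qed

lemma length_arch_dprod_le:
  assumes "\<forall>(w, a)\<in>set T. length (f w) \<le> (c + 1) * num_letters (f w) + c"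
  shows "length (arch_dprod f T) \<le> (c + 1) * num_letters (arch_dprod f T)"
  using assms by (induction T rule: arch_word.induct) (auto simp: num_letters_append algebra_simps)

lemma num_letters_arch_dprod_le:
  assumes "\<forall>(w, a)\<in>set T. num_letters (f w) \<le> d"
  shows "num_letters (arch_dprod f T) \<le> length T * (d + 1)"
  using assms by (induction T rule: arch_word.induct) (auto simp: num_letters_append)

text \<open>Setting f_0 = 0 makes the recursion of f_(k+1) valid for k = 0 as well.\<close>
definition fseq_ext :: "nat \<Rightarrow> nat \<Rightarrow> nat" where
  "fseq_ext j n = (if j = 0 then 0 else fseq j n)"

lemma fseq_ext_step:
  assumes "r \<le> n"
  shows "r * fseq_ext j (n + 1 - r) + r + fseq_ext j (n - r) \<le> fseq_ext (Suc j) n"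
proof (cases "j = 0")
  case True
  then show ?thesis using assms by (simp add: fseq_ext_def)
next
  case False
  have "r * fseq j (n + 1 - r) + r + fseq j (n - r)
      \<le> Max ((\<lambda>m. m * fseq j (n + 1 - m) + m + fseq j (n - m)) ` {0..n})"
    using assms by (intro Max_ge) auto
  then show ?thesis using False by (simp add: fseq_ext_def)
qed

lemma arch_dprod_size_bounds:
  assumes arches: "\<forall>(w, a)\<in>set T. num_letters (f w) \<le> fseq_ext j (n + 1 - length T)
      \<and> length (f w) \<le> (j + 1) * num_letters (f w) + j"
    and Q: "num_letters Q \<le> fseq_ext j (n - length T)" "length Q \<le> (j + 1) * num_letters Q + j + 1"
    and "length T \<le> n"
  shows "num_letters (arch_dprod f T @ Q) \<le> fseq_ext (Suc j) n"
    and "length (arch_dprod f T @ Q) \<le> (Suc j + 1) * num_letters (arch_dprod f T @ Q) + Suc j"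
proof -
  let ?r = "length T"
  have "num_letters (arch_dprod f T) \<le> ?r * (fseq_ext j (n + 1 - ?r) + 1)"
    using arches by (intro num_letters_arch_dprod_le) auto
  then have "num_letters (arch_dprod f T @ Q) \<le> ?r * fseq_ext j (n + 1 - ?r) + ?r + fseq_ext j (n - ?r)"
    using Q(1) by (simp add: num_letters_append algebra_simps)
  also have "\<dots> \<le> fseq_ext (Suc j) n" using fseq_ext_step \<open>?r \<le> n\<close> by blast
  finally show "num_letters (arch_dprod f T @ Q) \<le> fseq_ext (Suc j) n" .
  have "length (arch_dprod f T) \<le> (j + 1) * num_letters (arch_dprod f T)"
    using arches by (intro length_arch_dprod_le) auto
  then have "length (arch_dprod f T @ Q) \<le> (j + 1) * num_letters (arch_dprod f T @ Q) + Suc j"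
    using Q(2) by (simp add: num_letters_append algebra_simps)
  then show "length (arch_dprod f T @ Q) \<le> (Suc j + 1) * num_letters (arch_dprod f T @ Q) + Suc j"
    by (simp add: algebra_simps)
qed

definition bounded_dcover :: "nat \<Rightarrow> nat \<Rightarrow> 'a list \<Rightarrow> 'a dfactor list \<Rightarrow> bool" where
  "bounded_dcover j n u P \<longleftrightarrow> dproduct (set u) P \<and> u \<in> dlang P \<and> dlang P \<subseteq> {x. sim n x u}
     \<and> num_letters P \<le> fseq_ext j n \<and> length P \<le> (j + 1) * num_letters P + j"

lemma bounded_dcover_Nil: "bounded_dcover j n [] []"
  by (simp add: bounded_dcover_def dproduct_def sim_def)

text \<open>
  With all n arches present the tail only matters up to \<sim>0, where the single factor (alph v)*
  suffices; this is the extra 1 in the length bound.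
\<close>
lemma tail_dcover:
  fixes v :: "'a list"
  assumes IH: "\<And>u :: 'a list. \<And>n. card (set u) \<le> j \<Longrightarrow> \<exists>P. bounded_dcover j n u P"
    and B: "finite B" "card B \<le> Suc j" "set v \<subseteq> B" "r < n \<Longrightarrow> \<not> B \<subseteq> set v"
    and "r \<le> n"
  shows "\<exists>Q. dproduct (set v) Q \<and> v \<in> dlang Q \<and> dlang Q \<subseteq> {y. sim (n - r) y v}
    \<and> num_letters Q \<le> fseq_ext j (n - r) \<and> length Q \<le> (j + 1) * num_letters Q + j + 1"
proof (cases "r < n")
  case True
  then have "set v \<subset> B" using B by auto
  then have "card (set v) < card B" using B(1) by (rule psubset_card_mono[rotated])
  then have "card (set v) \<le> j" using B(2) by simp
  then obtain Q where "bounded_dcover j (n - r) v Q" using IH by blast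
  then show ?thesis unfolding bounded_dcover_def by auto
next
  case False
  then show ?thesis using \<open>r \<le> n\<close>
    by (intro exI[of _ "[Star (set v)]"]) (simp add: dproduct_def sim_0 in_lists_conv_set)
qed

lemma bounded_dcover_Suc:
  fixes u :: "'a list"
  assumes IH: "\<And>u :: 'a list. \<And>n. card (set u) \<le> j \<Longrightarrow> \<exists>P. bounded_dcover j n u P"
    and card_u: "card (set u) \<le> Suc j" and "u \<noteq> []"
  shows "\<exists>P. bounded_dcover (Suc j) n u P"
proof -
  define B where "B = set u"
  obtain T v where T: "length T \<le> n" "u = arch_word T @ v" "\<forall>(w, a)\<in>set T. is_arch B w a"
    "length T < n \<longrightarrow> \<not> B \<subseteq> set v"
    using arch_factorization[of u B n] \<open>u \<noteq> []\<close> unfolding B_def by blast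
  define r where "r = length T"
  define p where "p = n + 1 - r"
  have "\<forall>w :: 'a list. \<exists>P. card (set w) \<le> j \<longrightarrow> bounded_dcover j p w P" using IH by blast
  then obtain f where f: "\<And>w :: 'a list. card (set w) \<le> j \<Longrightarrow> bounded_dcover j p w (f w)" by metis
  have arches: "is_arch B w a \<and> bounded_dcover j p w (f w)" if "(w, a) \<in> set T" for w a
  proof -
    have arch: "is_arch B w a" using T(3) that by auto
    then have "card (set w) = card B - 1" unfolding is_arch_def by (metis card_insert_disjoint
      diff_Suc_1 finite_set)
    then show ?thesis using arch f card_u B_def by simp
  qed
  obtain Q where Q: "dproduct (set v) Q" "v \<in> dlang Q" "dlang Q \<subseteq> {y. sim (n - r) y v}"
    "num_letters Q \<le> fseq_ext j (n - r)" "length Q \<le> (j + 1) * num_letters Q + j + 1"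
    using tail_dcover[OF IH, of B v r n] T card_u B_def r_def by auto
  have arch_covers: "\<forall>(w, a)\<in>set T. is_arch B w a \<and> w \<in> dlang (f w)
      \<and> dlang (f w) \<subseteq> {x. sim p x w} \<and> dproduct B (f w)"
    using arches unfolding bounded_dcover_def is_arch_def by (fastforce intro: dproduct_mono)
  have Q_B: "dproduct B Q" using Q(1) T(2) B_def by (auto intro: dproduct_mono)
  have arch_sizes: "\<forall>(w, a)\<in>set T. num_letters (f w) \<le> fseq_ext j (n + 1 - length T)
      \<and> length (f w) \<le> (j + 1) * num_letters (f w) + j"
    using arches unfolding bounded_dcover_def p_def r_def by auto
  define P where "P = arch_dprod f T @ Q"
  note sizes = arch_dprod_size_bounds[OF arch_sizes Q(4,5)[unfolded r_def] T(1), folded P_def]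
  have "dproduct B P" unfolding P_def dproduct_append
    using arch_covers Q_B by (auto intro!: dproduct_arch_dprod simp: is_arch_def)
  moreover have "u \<in> dlang P" unfolding P_def T(2)
    using arch_covers Q(2) by (intro append_in_dlang_append arch_word_in_dlang) auto
  moreover have "dlang P \<subseteq> {x. sim n x u}"
    using arch_dprod_sim[OF arch_covers Q(2,3) Q_B, of n] T(1,2) r_def p_def unfolding P_def by auto
  ultimately show ?thesis using sizes unfolding bounded_dcover_def B_def by blast
qed

lemma bounded_dcover_exists: "card (set u) \<le> j \<Longrightarrow> \<exists>P. bounded_dcover j n u P"
proof (induction j arbitrary: u n)
  case 0
  then show ?case using bounded_dcover_Nil by fastforce
next
  case (Suc j)
  then show ?case using bounded_dcover_Suc bounded_dcover_Nil by metis
qed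

theorem lemma19:
  fixes A :: "'a set" and L :: "'a list set" and n :: nat
  assumes "finite A" and "A \<noteq> {}" and "n_PT A n L"
  shows "\<forall>u\<in>L. \<exists>P. dproduct A P \<and>
           length P \<le> fseq (card A) n * card A + fseq (card A) n + card A \<and>
           u \<in> dlang P \<and> dlang P \<subseteq> L"
proof
  fix u assume uL: "u \<in> L"
  define k where "k = card A"
  have "k \<noteq> 0" using assms(1,2) k_def by simp
  have uA: "set u \<subseteq> A" using uL assms(3) unfolding n_PT_def by auto
  then obtain P where P: "bounded_dcover k n u P"
    using bounded_dcover_exists card_mono[OF assms(1)] k_def by metis
  have dA: "dproduct A P" using P uA unfolding bounded_dcover_def by (blast intro: dproduct_mono)
  have "num_letters P \<le> fseq k n"
    using P \<open>k \<noteq> 0\<close> unfolding bounded_dcover_def fseq_ext_def by simp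
  then have "length P \<le> (k + 1) * fseq k n + k"
    using P unfolding bounded_dcover_def by (meson add_le_mono1 le_trans mult_le_mono2)
  then have len: "length P \<le> fseq k n * k + fseq k n + k" by (simp add: algebra_simps)
  have "dlang P \<subseteq> L"
  proof
    fix x assume x: "x \<in> dlang P"
    then have "x \<in> lists A" using dlang_subset_lists[OF dA] by blast
    then show "x \<in> L" using assms(3) uA uL x P unfolding n_PT_def bounded_dcover_def by blast
  qed
  then show "\<exists>P. dproduct A P \<and> length P \<le> fseq (card A) n * card A + fseq (card A) n + card A
      \<and> u \<in> dlang P \<and> dlang P \<subseteq> L"
    using dA len P k_def unfolding bounded_dcover_def by blast
qed

end
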